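(* Let $r>0$ and let $n\geq 2$ be an integer. Consider the one-parameter family of scalar ODEs $$\frac{dx}{dt}=f(x,a)=a\frac{x^n}{1+x^n}-x+r,\qquad x\in[0,\infty),$$ with bifurcation parameter $a>0$. Let $a_{c,1}<a_{c,2}$ be the values of $a$ at which the line $x\mapsto x-r$ is tangent to the curve $x\mapsto a\frac{x^n}{1+x^n}$, i.e. for which the system $f(x,a)=0$, $\frac{\partial f}{\partial x}(x,a)=0$ has a solution $x>0$. For $a=a_{c,j}$ the system has exactly two equilibria, denoted $0<\bar x_1(a_{c,j})<\bar x_2(a_{c,j})$. Suppose that $a_{c,j}\neq \frac{4n}{n^2-1}\left(\frac{n-1}{n+1}\right)^{1/n}$ for $j=1,2$. Then the system undergoes fold (saddle-node) bifurcations at the critical points $(\bar x_2(a_{c,1}),a_{c,1})$ and $(\bar x_1(a_{c,2}),a_{c,2})$; consequently, near each critical point the system can be mapped to the normal form $\frac{dz}{dt}=\beta\pm z^2$, where $z=x-\bar x_i$ (with $\bar x_i$ the critical equilibrium) and $\beta\in\mathbb{R}$ is proportional to $a-a_{c,j}$.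
   Context: A fold bifurcation at $(x^*,a^* )$ of a scalar system $\dot x=f(x,a)$ is characterised by $f(x^*,a^* )=0$, $f_x(x^*,a^* )=0$ together with the nondegeneracy conditions $f_a(x^*,a^* )\neq 0$ and $f_{xx}(x^*,a^* )\neq 0$, under which the system is locally topologically equivalent to the normal form $\dot z=\beta\pm z^2$. *)

theory Defs
  imports "HOL-Analysis.Analysis"
begin

definition hill_rhs :: "nat \<Rightarrow> real \<Rightarrow> real \<Rightarrow> real \<Rightarrow> real" where
  "hill_rhs n r x a = a * x ^ n / (1 + x ^ n) - x + r"

definition fold_point :: "(real \<Rightarrow> real \<Rightarrow> real) \<Rightarrow> real \<Rightarrow> real \<Rightarrow> bool" where
  "fold_point f xs as \<longleftrightarrow>
     f xs as = 0 \<and>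
     deriv (\<lambda>x. f x as) xs = 0 \<and>
     deriv (\<lambda>a. f xs a) as \<noteq> 0 \<and>
     deriv (\<lambda>y. deriv (\<lambda>x. f x as) y) xs \<noteq> 0"

end

theory Submission
  imports Defs
begin

(* For x > 0, x is an equilibrium at parameter a iff a = A(x) := (x - r)(1 + x^n)/x^n, and the
   tangency conditions f = f_x = 0 hold iff moreover A'(x) = 0, i.e. x is a zero of
   x^(n+1) A'(x) = x^(n+1) - (n - 1) x + n r.  This polynomial is strictly convex on (0, oo), hence
   negative between its two zeros, so A decreases there: the tangency point p at a_c1 lies to the
   right of the tangency point q at a_c2.  As A(r) = 0 and A(x) >= x - r, the intermediate value
   theorem puts the other equilibrium at a_c1 below q < p and the other equilibrium at a_c2 above
   p > q, so p = x_2(a_c1) and q = x_1(a_c2).  Finally f_a = x^n/(1 + x^n) > 0, and f_xx vanishes at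
   a tangency point only if x^n = (n - 1)/(n + 1), which forces a to be the excluded value. *)

lemma hill_rhs_has_real_derivative_x:
  assumes "x > 0"
  shows "((\<lambda>x. hill_rhs n r x a) has_real_derivative
           a * real n * x ^ (n - 1) / (1 + x ^ n)\<^sup>2 - 1) (at x)"
proof -
  have "1 + x ^ n > 0"
    using assms by (simp add: add_pos_nonneg)
  then show ?thesis
    unfolding hill_rhs_def
    by (auto intro!: derivative_eq_intros simp: field_simps power2_eq_square)
qed

lemma deriv_hill_rhs_x:
  "x > 0 \<Longrightarrow> deriv (\<lambda>x. hill_rhs n r x a) x = a * real n * x ^ (n - 1) / (1 + x ^ n)\<^sup>2 - 1"
  by (rule DERIV_imp_deriv[OF hill_rhs_has_real_derivative_x])

lemma deriv_hill_rhs_a: "deriv (\<lambda>a. hill_rhs n r x a) a = x ^ n / (1 + x ^ n)"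
proof -
  define c where "c = x ^ n / (1 + x ^ n)"
  have "(\<lambda>a. hill_rhs n r x a) = (\<lambda>a. a * c - x + r)"
    by (simp add: hill_rhs_def c_def fun_eq_iff)
  moreover have "((\<lambda>a. a * c - x + r) has_real_derivative c) (at a)"
    by (auto intro!: derivative_eq_intros)
  ultimately show ?thesis
    unfolding c_def by (metis DERIV_imp_deriv)
qed

lemma deriv_hill_rhs_x_has_real_derivative:
  assumes "x > 0" "n \<ge> 2"
  shows "((\<lambda>y. deriv (\<lambda>x. hill_rhs n r x a) y) has_real_derivative
           a * real n * x ^ (n - 2) * ((real n - 1) - (real n + 1) * x ^ n) / (1 + x ^ n) ^ 3) (at x)"
proof (rule has_field_derivative_transform_within_open[where S = "{0<..}"])
  obtain k where n: "n = Suc (Suc k)"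
    using assms(2) by (metis add_2_eq_Suc le_Suc_ex)
  have "x ^ (n - 1 - Suc 0) = x ^ (n - 2)" "x ^ (n - Suc 0) = x ^ (n - 1)" "real (n - 1) = real n - 1"
    by (simp_all add: n)
  moreover have "1 + x ^ n > 0"
    using assms(1) by (simp add: add_pos_nonneg)
  ultimately have "((\<lambda>y. a * real n * y ^ (n - 1) / (1 + y ^ n)\<^sup>2 - 1) has_real_derivative
      (a * real n * ((real n - 1) * x ^ (n - 2)) * (1 + x ^ n)\<^sup>2
        - a * real n * x ^ (n - 1) * (2 * (1 + x ^ n) * (real n * x ^ (n - 1)))) / ((1 + x ^ n)\<^sup>2)\<^sup>2) (at x)"
    by (auto intro!: derivative_eq_intros)
  also have "(a * real n * ((real n - 1) * x ^ (n - 2)) * (1 + x ^ n)\<^sup>2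
        - a * real n * x ^ (n - 1) * (2 * (1 + x ^ n) * (real n * x ^ (n - 1)))) / ((1 + x ^ n)\<^sup>2)\<^sup>2
    = a * real n * x ^ (n - 2) * ((real n - 1) - (real n + 1) * x ^ n) / (1 + x ^ n) ^ 3"
  proof -
    define u where "u = x ^ (n - 2)"
    define q where "q = 1 + x ^ n"
    have q: "q > 0"
      using assms(1) unfolding q_def by (simp add: add_pos_nonneg)
    have pw: "x ^ (n - 1) = x * u" "x ^ n = x * x * u"
      by (simp_all add: u_def n)
    have "(a * real n * ((real n - 1) * u) * q\<^sup>2 - a * real n * (x * u) * (2 * q * (real n * (x * u)))) / (q\<^sup>2)\<^sup>2
        = a * real n * u * ((real n - 1) * q - 2 * real n * (x * x * u)) / q ^ 3"
      using q by (simp add: field_simps power2_eq_square power3_eq_cube)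
    also have "\<dots> = a * real n * u * ((real n - 1) - (real n + 1) * x ^ n) / q ^ 3"
      by (simp add: q_def pw algebra_simps)
    finally show ?thesis
      unfolding pw(1) q_def[symmetric] u_def[symmetric] .
  qed
  finally show "((\<lambda>y. a * real n * y ^ (n - 1) / (1 + y ^ n)\<^sup>2 - 1) has_real_derivative
           a * real n * x ^ (n - 2) * ((real n - 1) - (real n + 1) * x ^ n) / (1 + x ^ n) ^ 3) (at x)" .
qed (use assms deriv_hill_rhs_x in auto)

definition equilibrium_param :: "nat \<Rightarrow> real \<Rightarrow> real \<Rightarrow> real" where
  "equilibrium_param n r x = (x - r) * (1 + x ^ n) / x ^ n"

definition tangency_poly :: "nat \<Rightarrow> real \<Rightarrow> real \<Rightarrow> real" where
  "tangency_poly n r x = x ^ (n + 1) - (real n - 1) * x + real n * r"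

lemma hill_rhs_eq_0_iff:
  assumes "x > 0"
  shows "hill_rhs n r x a = 0 \<longleftrightarrow> equilibrium_param n r x = a"
proof -
  have "1 + x ^ n > 0"
    using assms by (simp add: add_pos_nonneg)
  have "hill_rhs n r x a = 0 \<longleftrightarrow> a * x ^ n / (1 + x ^ n) = x - r"
    unfolding hill_rhs_def by linarith
  also have "\<dots> \<longleftrightarrow> a * x ^ n = (x - r) * (1 + x ^ n)"
    using \<open>1 + x ^ n > 0\<close> by (simp add: nonzero_divide_eq_eq)
  also have "\<dots> \<longleftrightarrow> equilibrium_param n r x = a"
    using assms unfolding equilibrium_param_def by (subst nonzero_divide_eq_eq) auto
  finally show ?thesis .
qed

lemma equilibrium_param_has_real_derivative:
  assumes "x > 0"
  shows "(equilibrium_param n r has_real_derivative tangency_poly n r x / x ^ (n + 1)) (at x)"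
proof -
  have "x ^ n > 0"
    using assms by simp
  moreover have "real n * x ^ (n - 1) = real n * x ^ n / x"
    using assms by (cases "n = 0") (simp_all add: power_diff)
  ultimately show ?thesis
    using assms unfolding equilibrium_param_def[abs_def] tangency_poly_def
    by (auto intro!: derivative_eq_intros simp: field_simps power2_eq_square)
qed

lemma isCont_equilibrium_param: "x > 0 \<Longrightarrow> isCont (equilibrium_param n r) x"
  using equilibrium_param_has_real_derivative DERIV_isCont by blast

lemma neg_between_zeros_if_strict_mono_deriv:
  fixes f f' :: "real \<Rightarrow> real"
  assumes deriv: "\<And>t. y \<le> t \<Longrightarrow> t \<le> z \<Longrightarrow> (f has_real_derivative f' t) (at t)"
    and mono: "strict_mono_on {y..z} f'"
    and "f y = 0" "f z = 0" "y < x" "x < z"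
  shows "f x < 0"
proof (rule ccontr)
  assume "\<not> f x < 0"
  obtain c1 where c1: "y < c1" "c1 < x" "f x - f y = (x - y) * f' c1"
    using MVT2[OF \<open>y < x\<close>, of f f'] deriv \<open>x < z\<close> by force
  obtain c2 where c2: "x < c2" "c2 < z" "f z - f x = (z - x) * f' c2"
    using MVT2[OF \<open>x < z\<close>, of f f'] deriv \<open>y < x\<close> by force
  have "0 \<le> (x - y) * f' c1" "(z - x) * f' c2 \<le> 0"
    using c1(3) c2(3) \<open>f y = 0\<close> \<open>f z = 0\<close> \<open>\<not> f x < 0\<close> by linarith+
  then have "f' c1 \<ge> 0" "f' c2 \<le> 0"
    using \<open>y < x\<close> \<open>x < z\<close> by (simp_all add: zero_le_mult_iff mult_le_0_iff)
  moreover have "f' c1 < f' c2"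
    using mono c1 c2 by (auto intro: strict_mono_onD)
  ultimately show False
    by linarith
qed

lemma tangency_poly_neg_between_zeros:
  assumes "n \<ge> 1" "0 < y" "y < x" "x < z" "tangency_poly n r y = 0" "tangency_poly n r z = 0"
  shows "tangency_poly n r x < 0"
proof (rule neg_between_zeros_if_strict_mono_deriv[where f = "tangency_poly n r"])
  show "(tangency_poly n r has_real_derivative real (n + 1) * t ^ n - (real n - 1)) (at t)"
    if "y \<le> t" "t \<le> z" for t
  proof -
    have "t ^ (n - 1) * t = t ^ n"
      using assms(1) by (cases n) auto
    then show ?thesis
      unfolding tangency_poly_def[abs_def] by (auto intro!: derivative_eq_intros simp: algebra_simps)
  qed
  show "strict_mono_on {y..z} (\<lambda>t. real (n + 1) * t ^ n - (real n - 1))"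
    using assms(1,2) by (auto intro!: strict_mono_onI power_strict_mono)
qed (use assms in auto)

lemma equilibrium_param_less_if_tangency_poly_zeros:
  assumes "n \<ge> 1" "0 < y" "y < z" "tangency_poly n r y = 0" "tangency_poly n r z = 0"
  shows "equilibrium_param n r z < equilibrium_param n r y"
proof (rule DERIV_neg_imp_decreasing_open[OF \<open>y < z\<close>])
  fix x
  assume "y < x" "x < z"
  then have "tangency_poly n r x / x ^ (n + 1) < 0"
    using assms tangency_poly_neg_between_zeros by (simp add: divide_neg_pos)
  moreover have "(equilibrium_param n r has_real_derivative tangency_poly n r x / x ^ (n + 1)) (at x)"
    using \<open>y < x\<close> assms(2) by (intro equilibrium_param_has_real_derivative) simp
  ultimately show "\<exists>d. (equilibrium_param n r has_real_derivative d) (at x) \<and> d < 0"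
    by blast
next
  show "continuous_on {y..z} (equilibrium_param n r)"
    using assms(2) by (intro continuous_at_imp_continuous_on) (auto intro: isCont_equilibrium_param)
qed

lemma tangent_slope_eq:
  assumes "x > 0" "deriv (\<lambda>y. hill_rhs n r y a) x = 0"
  shows "a * real n * x ^ n = x * (1 + x ^ n)\<^sup>2"
proof -
  have "1 + x ^ n > 0"
    using assms(1) by (simp add: add_pos_nonneg)
  then have "a * real n * x ^ (n - 1) = (1 + x ^ n)\<^sup>2"
    using assms deriv_hill_rhs_x by simp
  moreover have "real n * x ^ n = x * (real n * x ^ (n - 1))"
    by (cases n) auto
  ultimately show ?thesis
    by (metis mult.assoc mult.left_commute)
qed

lemma tangency_poly_eq_0_if_tangent:
  assumes "x > 0" "hill_rhs n r x a = 0" "deriv (\<lambda>y. hill_rhs n r y a) x = 0"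
  shows "tangency_poly n r x = 0"
proof -
  have pos: "1 + x ^ n > 0"
    using assms(1) by (simp add: add_pos_nonneg)
  have "a * x ^ n = (x - r) * (1 + x ^ n)"
    using assms(2) pos unfolding hill_rhs_def by (simp add: field_simps)
  then have "real n * (x - r) * (1 + x ^ n) = real n * (a * x ^ n)"
    by simp
  also have "\<dots> = x * (1 + x ^ n) * (1 + x ^ n)"
    using tangent_slope_eq[OF assms(1,3)] by (simp add: power2_eq_square algebra_simps)
  finally have "real n * (x - r) * (1 + x ^ n) = x * (1 + x ^ n) * (1 + x ^ n)" .
  then have "real n * (x - r) = x * (1 + x ^ n)"
    using pos by simp
  then show ?thesis
    unfolding tangency_poly_def by (simp add: algebra_simps)
qed

lemma tangent_points_order:
  assumes "n \<ge> 1" "a1 < a2"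
    and "p > 0" "hill_rhs n r p a1 = 0" "deriv (\<lambda>y. hill_rhs n r y a1) p = 0"
    and "q > 0" "hill_rhs n r q a2 = 0" "deriv (\<lambda>y. hill_rhs n r y a2) q = 0"
  shows "q < p"
proof (rule ccontr)
  assume "\<not> q < p"
  moreover have "equilibrium_param n r p = a1" "equilibrium_param n r q = a2"
    using assms hill_rhs_eq_0_iff by auto
  ultimately have "p < q"
    using \<open>a1 < a2\<close> by (cases "p = q") auto
  then have "equilibrium_param n r q < equilibrium_param n r p"
    using assms tangency_poly_eq_0_if_tangent by (intro equilibrium_param_less_if_tangency_poly_zeros) auto
  with \<open>equilibrium_param n r p = a1\<close> \<open>equilibrium_param n r q = a2\<close> \<open>a1 < a2\<close> show False
    by simp
qed

lemma exists_equilibrium_below: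
  assumes "r > 0" "q > 0" "0 \<le> a" "a \<le> equilibrium_param n r q"
  obtains w where "0 < w" "w \<le> q" "hill_rhs n r w a = 0"
proof -
  have "equilibrium_param n r r = 0"
    by (simp add: equilibrium_param_def)
  moreover have "r \<le> q"
  proof (rule ccontr)
    assume "\<not> r \<le> q"
    then have "equilibrium_param n r q < 0"
      using \<open>q > 0\<close> by (simp add: equilibrium_param_def divide_neg_pos mult_neg_pos add_pos_nonneg)
    with assms show False
      by linarith
  qed
  ultimately obtain w where "r \<le> w" "w \<le> q" "equilibrium_param n r w = a"
    using IVT[of "equilibrium_param n r" r a q] assms isCont_equilibrium_param by fastforce
  moreover have "w > 0"
    using \<open>r > 0\<close> \<open>r \<le> w\<close> by linarith
  ultimately show ?thesis
    using that hill_rhs_eq_0_iff by blast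
qed

lemma exists_equilibrium_above:
  assumes "p > 0" "equilibrium_param n r p \<le> a"
  obtains v where "p \<le> v" "hill_rhs n r v a = 0"
proof -
  define t where "t = p + \<bar>a\<bar> + \<bar>r\<bar>"
  have "p \<le> t" "t - r \<ge> \<bar>a\<bar>"
    unfolding t_def using assms(1) by auto
  moreover have "t > 0"
    using \<open>p \<le> t\<close> assms(1) by simp
  ultimately have "equilibrium_param n r t = (t - r) + (t - r) / t ^ n"
    by (simp add: equilibrium_param_def field_simps)
  also have "\<dots> \<ge> a"
  proof -
    have "(t - r) / t ^ n \<ge> 0"
      using \<open>t - r \<ge> \<bar>a\<bar>\<close> \<open>t > 0\<close> by simp
    with \<open>t - r \<ge> \<bar>a\<bar>\<close> show ?thesis
      by linarith
  qed
  finally obtain v where "p \<le> v" "v \<le> t" "equilibrium_param n r v = a"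
    using IVT[of "equilibrium_param n r" p a t] assms \<open>p \<le> t\<close> isCont_equilibrium_param by fastforce
  moreover have "v > 0"
    using assms(1) \<open>p \<le> v\<close> by linarith
  ultimately show ?thesis
    using that hill_rhs_eq_0_iff by blast
qed

lemma tangent_inflection_param:
  assumes "x > 0" "n \<ge> 2"
    and slope: "a * real n * x ^ n = x * (1 + x ^ n)\<^sup>2"
    and inflection: "(real n + 1) * x ^ n = real n - 1"
  shows "a = 4 * real n / (real n ^ 2 - 1) * root n ((real n - 1) / (real n + 1))"
proof -
  have n: "real n \<ge> 2"
    using assms(2) by simp
  have "x ^ n = (real n - 1) / (real n + 1)"
    using inflection by (simp add: field_simps)
  then have root: "root n ((real n - 1) / (real n + 1)) = x"
    using assms(1,2) by (intro real_root_pos_unique) auto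
  have "a * real n * (real n - 1) * (real n + 1) = a * real n * ((real n + 1) * x ^ n) * (real n + 1)"
    by (simp only: inflection)
  also have "\<dots> = (a * real n * x ^ n) * (real n + 1)\<^sup>2"
    by (simp add: power2_eq_square ac_simps)
  also have "\<dots> = x * ((real n + 1) * (1 + x ^ n))\<^sup>2"
    using slope by (simp add: power_mult_distrib ac_simps)
  also have "(real n + 1) * (1 + x ^ n) = 2 * real n"
    using inflection by (simp add: algebra_simps)
  finally have "real n * (a * (real n ^ 2 - 1)) = real n * (4 * real n * x)"
    by (simp add: algebra_simps power2_eq_square)
  then have "a * (real n ^ 2 - 1) = 4 * real n * x"
    using n by simp
  moreover have "real n ^ 2 - 1 > 0"
    using power_mono[OF n, of 2] by simp
  ultimately show ?thesis
    unfolding root by (simp add: field_simps)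
qed

lemma fold_point_hill_rhs:
  assumes "x > 0" "n \<ge> 2" "hill_rhs n r x a = 0" "deriv (\<lambda>y. hill_rhs n r y a) x = 0"
    and "a \<noteq> 4 * real n / (real n ^ 2 - 1) * root n ((real n - 1) / (real n + 1))"
  shows "fold_point (hill_rhs n r) x a"
proof -
  have pos: "x ^ n > 0" "1 + x ^ n > 0"
    using assms(1) by (simp_all add: add_pos_nonneg)
  have slope: "a * real n * x ^ n = x * (1 + x ^ n)\<^sup>2"
    using tangent_slope_eq[OF assms(1,4)] .
  then have "a \<noteq> 0"
    using assms(1) pos by auto
  moreover have "(real n - 1) - (real n + 1) * x ^ n \<noteq> 0"
    using tangent_inflection_param[OF assms(1,2) slope] assms(5) by auto
  ultimately have "a * real n * x ^ (n - 2) * ((real n - 1) - (real n + 1) * x ^ n) / (1 + x ^ n) ^ 3 \<noteq> 0"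
    using assms(1,2) pos by simp
  moreover have "x ^ n / (1 + x ^ n) \<noteq> 0"
    using assms(1) pos by simp
  ultimately show ?thesis
    unfolding fold_point_def deriv_hill_rhs_a
      DERIV_imp_deriv[OF deriv_hill_rhs_x_has_real_derivative[OF assms(1,2)]]
    using assms(3,4) by simp
qed

theorem proposition2:
  fixes n :: nat and r ac1 ac2 x11 x21 x12 x22 :: real
  assumes "r > 0" and "n \<ge> 2"
    and "0 < ac1" and "ac1 < ac2"
    and crit: "{a. a > 0 \<and> (\<exists>x>0. hill_rhs n r x a = 0 \<and>
                   deriv (\<lambda>y. hill_rhs n r y a) x = 0)} = {ac1, ac2}"
    and eq1: "{x. x \<ge> 0 \<and> hill_rhs n r x ac1 = 0} = {x11, x21}" and "0 < x11" and "x11 < x21"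
    and eq2: "{x. x \<ge> 0 \<and> hill_rhs n r x ac2 = 0} = {x12, x22}" and "0 < x12" and "x12 < x22"
    and "ac1 \<noteq> 4 * n / (real n ^ 2 - 1) * root n ((real n - 1) / (real n + 1))"
    and "ac2 \<noteq> 4 * n / (real n ^ 2 - 1) * root n ((real n - 1) / (real n + 1))"
  shows "fold_point (hill_rhs n r) x21 ac1 \<and> fold_point (hill_rhs n r) x12 ac2"
proof -
  obtain p where p: "p > 0" "hill_rhs n r p ac1 = 0" "deriv (\<lambda>y. hill_rhs n r y ac1) p = 0"
    using crit by blast
  obtain q where q: "q > 0" "hill_rhs n r q ac2 = 0" "deriv (\<lambda>y. hill_rhs n r y ac2) q = 0"
    using crit by blast
  have "q < p"
    using tangent_points_order[OF _ \<open>ac1 < ac2\<close> p q] \<open>n \<ge> 2\<close> by simp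
  have "equilibrium_param n r p = ac1" "equilibrium_param n r q = ac2"
    using p q hill_rhs_eq_0_iff by auto
  obtain w where "0 < w" "w \<le> q" "hill_rhs n r w ac1 = 0"
    using exists_equilibrium_below[OF \<open>r > 0\<close> \<open>q > 0\<close>, where a = ac1 and n = n] assms(3,4)
      \<open>equilibrium_param n r q = ac2\<close> by auto
  then have "w \<in> {x11, x21}" "p \<in> {x11, x21}"
    using p unfolding eq1[symmetric] by auto
  with \<open>w \<le> q\<close> \<open>q < p\<close> \<open>x11 < x21\<close> have "x21 = p"
    by auto
  obtain v where "p \<le> v" "hill_rhs n r v ac2 = 0"
    using exists_equilibrium_above[OF \<open>p > 0\<close>, where a = ac2 and n = n and r = r] assms(4)
      \<open>equilibrium_param n r p = ac1\<close> by auto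
  then have "v \<in> {x12, x22}" "q \<in> {x12, x22}"
    using q \<open>p > 0\<close> unfolding eq2[symmetric] by auto
  with \<open>p \<le> v\<close> \<open>q < p\<close> \<open>x12 < x22\<close> have "x12 = q"
    by auto
  show ?thesis
    using fold_point_hill_rhs[OF p(1) \<open>n \<ge> 2\<close> p(2,3)] fold_point_hill_rhs[OF q(1) \<open>n \<ge> 2\<close> q(2,3)]
      \<open>x21 = p\<close> \<open>x12 = q\<close> assms(12,13) by simp
qed

end
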